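(* Let $(I_t)_{t\ge0}$ be a nested interval-partition with comb metric $d_I$. There exist a countable set $F$ disjoint from $[0,1]$ and a pseudo-ultrametric $\bar d_I$ on $[0,1]\cup F$ extending $d_I$ such that the backbone associated with $([0,1]\cup F,\bar d_I)$, endowed with the Lebesgue measure on $\mathscr I$ extended by zero mass on $F$, is a complete metric space.
   Context: A nested interval-partition is a càdlàg (for the Hausdorff distance between complements) map $t\mapsto I_t$, $t\ge0$, into open subsets of $(0,1)$ with $I_s\subseteq I_t$ for $s\le t$. $f_I(x)=\inf\{t\ge0:x\in I_t\}$ and $d_I(x,y)=\mathbf 1_{\{x\ne y\}}\sup_{[x\wedge y,x\vee y]}f_I$. With $(I^0_i)$ the interval components of $I_0$, $\mathscr I=\{A\cup\bigcup_{i\in M}I^0_i:A\in\mathscr B([0,1]\setminus I_0),M\subseteq\mathbb N\}$. Backbone of a space $(U,d)$ with probability measure $\mu$ (defined on a $\sigma$-field containing the open balls $B(x,t)=\{y:d(x,y)<t\}$): on $U\times\mathbb R_+$ let $d_T((x,s),(y,t))=\max(d(x,y)-\frac{s+t}2,\frac{|t-s|}2)$, $T$ the quotient by $d_T=0$, $f(x)=\inf\{t\ge0:\mu(B(x,t))>0\}$, and the backbone is $\mathcal S=\{(x,t)\in T:t\ge f(x)\}$ with the restriction of $d_T$. *)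

theory Defs
  imports "HOL-Analysis.Analysis"
begin

definition compl01 :: "real set \<Rightarrow> real set" where
  "compl01 A = {0..1} - A"

definition hdist :: "real set \<Rightarrow> real set \<Rightarrow> real" where
  "hdist A B = max (SUP a\<in>A. infdist a B) (SUP b\<in>B. infdist b A)"

text \<open>Nested interval-partition: nested open subsets of (0,1), indexed by t \<ge> 0,
  cadlag for the Hausdorff distance between complements in [0,1].\<close>
definition nested_interval_partition :: "(real \<Rightarrow> real set) \<Rightarrow> bool" where
  "nested_interval_partition I \<longleftrightarrow>
     (\<forall>t\<ge>0. open (I t) \<and> I t \<subseteq> {0<..<1}) \<and>
     (\<forall>s t. 0 \<le> s \<longrightarrow> s \<le> t \<longrightarrow> I s \<subseteq> I t) \<and>
     (\<forall>t\<ge>0. ((\<lambda>s. hdist (compl01 (I s)) (compl01 (I t))) \<longlongrightarrow> 0) (at_right t)) \<and>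
     (\<forall>t>0. \<exists>K. compact K \<and> K \<noteq> {} \<and>
        ((\<lambda>s. hdist (compl01 (I s)) K) \<longlongrightarrow> 0) (at_left t))"

text \<open>f_I(x) = inf{t \<ge> 0 : x \<in> I_t} (infimum of the empty set is \<infinity>).\<close>
definition fI :: "(real \<Rightarrow> real set) \<Rightarrow> real \<Rightarrow> ereal" where
  "fI I x = Inf {ereal t | t. t \<ge> 0 \<and> x \<in> I t}"

definition dI :: "(real \<Rightarrow> real set) \<Rightarrow> real \<Rightarrow> real \<Rightarrow> ereal" where
  "dI I x y = (if x = y then 0 else Sup (fI I ` {min x y .. max x y}))"

definition scrI :: "(real \<Rightarrow> real set) \<Rightarrow> real set set" where
  "scrI I = {A \<union> \<Union>M | A M. A \<in> sets borel \<and> A \<subseteq> {0..1} - I 0 \<and> M \<subseteq> components (I 0)}"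

definition pseudo_ultrametric_on :: "'a set \<Rightarrow> ('a \<Rightarrow> 'a \<Rightarrow> ereal) \<Rightarrow> bool" where
  "pseudo_ultrametric_on U d \<longleftrightarrow>
     (\<forall>x\<in>U. d x x = 0) \<and>
     (\<forall>x\<in>U. \<forall>y\<in>U. 0 \<le> d x y \<and> d x y = d y x) \<and>
     (\<forall>x\<in>U. \<forall>y\<in>U. \<forall>z\<in>U. d x z \<le> max (d x y) (d y z))"

definition oball :: "'a set \<Rightarrow> ('a \<Rightarrow> 'a \<Rightarrow> ereal) \<Rightarrow> 'a \<Rightarrow> real \<Rightarrow> 'a set" where
  "oball U d x t = {y \<in> U. d x y < ereal t}"

definition bb_f :: "'a set \<Rightarrow> ('a \<Rightarrow> 'a \<Rightarrow> ereal) \<Rightarrow> ('a set \<Rightarrow> ennreal) \<Rightarrow> 'a \<Rightarrow> ereal" where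
  "bb_f U d \<mu> x = Inf {ereal t | t. t \<ge> 0 \<and> \<mu> (oball U d x t) > 0}"

definition dT :: "('a \<Rightarrow> 'a \<Rightarrow> ereal) \<Rightarrow> 'a \<times> real \<Rightarrow> 'a \<times> real \<Rightarrow> ereal" where
  "dT d p q = max (d (fst p) (fst q) - ereal ((snd p + snd q) / 2))
                  (ereal (\<bar>snd q - snd p\<bar> / 2))"

text \<open>Representatives of backbone points: (x,t) with t \<ge> 0 and t \<ge> f(x).
  The backbone is the quotient of this set by d_T = 0.\<close>
definition backbone_reps :: "'a set \<Rightarrow> ('a \<Rightarrow> 'a \<Rightarrow> ereal) \<Rightarrow> ('a set \<Rightarrow> ennreal) \<Rightarrow> ('a \<times> real) set" where
  "backbone_reps U d \<mu> = {(x, t). x \<in> U \<and> t \<ge> 0 \<and> bb_f U d \<mu> x \<le> ereal t}"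

text \<open>A set S with an (extended-valued) distance D whose metric quotient (by D = 0) is
  a complete metric space: D is a pseudometric on S and every D-Cauchy sequence in S
  converges in S.\<close>
definition complete_quotient_metric :: "'b set \<Rightarrow> ('b \<Rightarrow> 'b \<Rightarrow> ereal) \<Rightarrow> bool" where
  "complete_quotient_metric S D \<longleftrightarrow>
     (\<forall>x\<in>S. D x x = 0) \<and>
     (\<forall>x\<in>S. \<forall>y\<in>S. 0 \<le> D x y \<and> D x y = D y x) \<and>
     (\<forall>x\<in>S. \<forall>y\<in>S. \<forall>z\<in>S. D x z \<le> D x y + D y z) \<and>
     (\<forall>\<sigma>. (\<forall>n. \<sigma> n \<in> S) \<and>
           (\<forall>e>0. \<exists>N. \<forall>m\<ge>N. \<forall>n\<ge>N. D (\<sigma> m) (\<sigma> n) < ereal e)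
        \<longrightarrow> (\<exists>p\<in>S. (\<lambda>n. D (\<sigma> n) p) \<longlonglongrightarrow> 0))"

end

theory Submission
  imports Defs
begin

text \<open>
  The comb distance \<open>d\<^sub>I(x, y) = sup f\<^sub>I\<close> over \<open>[x, y]\<close> is already a pseudo-ultrametric on
  \<open>[0,1]\<close>; what fails is completeness of the backbone: a Cauchy sequence may approach a point
  \<open>a\<close> from one side while \<open>f\<^sub>I(a)\<close> exceeds the limsup of \<open>f\<^sub>I\<close> on that side. For each such
  \<open>a\<close> and side we adjoin a ghost point immediately beside \<open>a\<close> in the order of \<open>[0,1]\<close>, whose
  height is that one-sided limsup, and let \<open>d\<close> be the supremum of heights over order intervals.
  There are only countably many such points, and balls meet \<open>[0,1]\<close> in intervals.
  If \<open>(x\<^sub>n, s\<^sub>n)\<close> is Cauchy in the backbone with \<open>s\<^sub>n \<rightarrow> t\<close>, the points eventually within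
  \<open>t + e\<close> of the sequence form order-convex sets which, by the mass condition, meet \<open>[0,1]\<close>;
  an accumulation point \<open>a\<close> of these real points, or the ghost of \<open>a\<close> on the side from which
  they approach, lies in all of them and is the limit.
\<close>

section \<open>Countably many upward jumps\<close>

text \<open>Each point of the set is separated by rationals \<open>q, r\<close> with \<open>f \<le> r\<close> on \<open>(a, q)\<close> and
  \<open>r < f a\<close>, and a pair \<open>(q, r)\<close> separates at most one point.\<close>

lemma countable_above_right_limsup:
  fixes f :: "real \<Rightarrow> ereal"
  shows "countable {a. (INF \<delta>\<in>{0<..}. SUP h\<in>{0<..<\<delta>}. f (a + h)) < f a}"
    (is "countable ?P")
proof -
  define S where "S q r = {a. a < q \<and> (\<forall>z\<in>{a<..<q}. f z \<le> ereal r) \<and> ereal r < f a}" for q r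
  have "?P \<subseteq> (\<Union>(q, r)\<in>\<rat> \<times> \<rat>. S q r)"
  proof
    fix a assume "a \<in> ?P"
    then obtain r0 where r0: "(INF \<delta>\<in>{0<..}. SUP h\<in>{0<..<\<delta>}. f (a + h)) < ereal r0" "ereal r0 < f a"
      using ereal_dense2 by blast
    then obtain \<delta> where \<delta>: "\<delta> > 0" "(SUP h\<in>{0<..<\<delta>}. f (a + h)) < ereal r0"
      by (auto simp: INF_less_iff)
    obtain r1 where r1: "ereal r0 < ereal r1" "ereal r1 < f a"
      using ereal_dense2[OF r0(2)] by blast
    obtain r where r: "r \<in> \<rat>" "r0 < r" "r < r1"
      using Rats_dense_in_real[of r0 r1] r1(1) by auto
    obtain q where q: "q \<in> \<rat>" "a < q" "q < a + \<delta>"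
      using Rats_dense_in_real[of a "a + \<delta>"] \<delta>(1) by auto
    have "f z \<le> ereal r" if "z \<in> {a<..<q}" for z
    proof -
      have "f z = f (a + (z - a))" by simp
      also have "\<dots> \<le> (SUP h\<in>{0<..<\<delta>}. f (a + h))"
        using that q by (intro SUP_upper) auto
      also have "\<dots> \<le> ereal r" using \<delta>(2) r(2) by (meson less_ereal.simps(1) less_imp_le order.strict_trans)
      finally show ?thesis .
    qed
    moreover have "ereal r < f a" using r(3) r1(2) by (metis less_ereal.simps(1) order_less_trans)
    ultimately have "a \<in> S q r" using q(2) by (simp add: S_def)
    then show "a \<in> (\<Union>(q, r)\<in>\<rat> \<times> \<rat>. S q r)" using q(1) r(1) by blast
  qed
  moreover have "countable (S q r)" for q r
  proof -
    have not_less: "\<not> a < b" if "a \<in> S q r" "b \<in> S q r" for a b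
      using that by (force simp: S_def)
    have "S q r \<subseteq> {a}" if "a \<in> S q r" for a
    proof
      fix b assume "b \<in> S q r"
      then show "b \<in> {a}" using not_less[OF that] not_less[OF _ that] by force
    qed
    then show ?thesis
      by (metis countable_empty countable_insert countable_subset equals0I)
  qed
  then have "countable (\<Union>(q, r)\<in>\<rat> \<times> \<rat>. S q r)"
    by (intro countable_UN countable_SIGMA countable_rat) auto
  ultimately show ?thesis by (rule countable_subset)
qed

section \<open>A completeness criterion for backbones\<close>

lemma dT_self: "d (fst p) (fst p) = 0 \<Longrightarrow> 0 \<le> snd p \<Longrightarrow> dT d p p = 0"
  by (simp add: dT_def max_def zero_ereal_def)

lemma dT_nonneg: "0 \<le> dT d p q"
  by (simp add: dT_def max.coboundedI2)

lemma dT_sym: "d (fst p) (fst q) = d (fst q) (fst p) \<Longrightarrow> dT d p q = dT d q p"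
  by (simp add: dT_def add.commute abs_minus_commute)

lemma dT_triangle:
  assumes "pseudo_ultrametric_on U d" "fst p \<in> U" "fst q \<in> U" "fst r \<in> U"
  shows "dT d p r \<le> dT d p q + dT d q r"
proof -
  obtain x s y t z u where pqr: "p = (x, s)" "q = (y, t)" "r = (z, u)"
    by (cases p, cases q, cases r)
  have U: "x \<in> U" "y \<in> U" "z \<in> U" using assms(2-4) pqr by auto
  define A where "A = dT d p q"
  define B where "B = dT d q r"
  have A: "d x y - ereal ((s + t) / 2) \<le> A" "ereal (\<bar>t - s\<bar> / 2) \<le> A"
    and B: "d y z - ereal ((t + u) / 2) \<le> B" "ereal (\<bar>u - t\<bar> / 2) \<le> B"
    by (simp_all add: A_def B_def dT_def pqr)
  have nonneg: "0 \<le> d x y" "0 \<le> d y z"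
    using assms(1) U by (auto simp: pseudo_ultrametric_on_def)
  have ultra: "d x z \<le> max (d x y) (d y z)"
    using assms(1) U by (auto simp: pseudo_ultrametric_on_def)
  have "ereal (\<bar>u - s\<bar> / 2) \<le> ereal (\<bar>t - s\<bar> / 2) + ereal (\<bar>u - t\<bar> / 2)"
    by simp
  also have "\<dots> \<le> A + B" using A(2) B(2) by (rule add_mono)
  finally have 1: "ereal (\<bar>u - s\<bar> / 2) \<le> A + B" .
  have 2: "d x z - ereal ((s + u) / 2) \<le> A + B"
  proof (cases "d x z \<le> d y z")
    case True
    then have "d x z - ereal ((s + u) / 2) \<le> (d y z - ereal ((t + u) / 2)) + ereal (\<bar>t - s\<bar> / 2)"
      using nonneg abs_ge_self[of "t - s"] by (cases "d x z"; cases "d y z") (auto simp: field_simps)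
    also have "\<dots> \<le> B + A" using B(1) A(2) by (rule add_mono)
    finally show ?thesis by (simp add: add.commute)
  next
    case False
    then have "d x z \<le> d x y" using ultra by (auto simp: le_max_iff_disj)
    then have "d x z - ereal ((s + u) / 2) \<le> (d x y - ereal ((s + t) / 2)) + ereal (\<bar>u - t\<bar> / 2)"
      using nonneg abs_ge_minus_self[of "u - t"] by (cases "d x z"; cases "d x y") (auto simp: field_simps)
    also have "\<dots> \<le> A + B" using A(1) B(2) by (rule add_mono)
    finally show ?thesis .
  qed
  show ?thesis using 1 2 by (simp add: dT_def pqr A_def B_def)
qed

lemma oball_mono: "r \<le> r' \<Longrightarrow> oball U d x r \<subseteq> oball U d x r'"
  by (auto simp: oball_def intro: order_less_le_trans)

lemma bb_f_less_imp_positive_ball: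
  assumes "\<And>r r'. r \<le> r' \<Longrightarrow> \<mu> (oball U d x r) \<le> \<mu> (oball U d x r')"
    and "bb_f U d \<mu> x < ereal r"
  shows "0 < \<mu> (oball U d x r)"
proof -
  obtain r' where "0 < \<mu> (oball U d x r')" "r' < r"
    using assms(2) by (auto simp: bb_f_def Inf_less_iff)
  then show ?thesis using assms(1)[of r' r] by simp
qed

lemma dT_Cauchy_imp_Cauchy_heights:
  assumes "\<forall>e>0. \<exists>N. \<forall>m\<ge>N. \<forall>n\<ge>N. dT d (x m, s m) (x n, s n) < ereal e"
  shows "Cauchy s"
proof (rule metric_CauchyI)
  fix e :: real assume "0 < e"
  then obtain N where N: "\<forall>m\<ge>N. \<forall>n\<ge>N. dT d (x m, s m) (x n, s n) < ereal (e / 2)"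
    using assms by (meson half_gt_zero)
  have "dist (s m) (s n) < e" if "N \<le> m" "N \<le> n" for m n
    using N that by (auto simp: dT_def dist_real_def abs_minus_commute)
  then show "\<exists>N. \<forall>m\<ge>N. \<forall>n\<ge>N. dist (s m) (s n) < e" by blast
qed

lemma dT_Cauchy_imp_eventually_close:
  assumes cauchy: "\<forall>e>0. \<exists>N. \<forall>m\<ge>N. \<forall>n\<ge>N. dT d (x m, s m) (x n, s n) < ereal e"
    and "s \<longlonglongrightarrow> t" "e > 0"
  shows "\<exists>N. \<forall>m\<ge>N. \<forall>n\<ge>N. d (x m) (x n) < ereal (t + e)"
proof -
  obtain N1 where N1: "\<forall>m\<ge>N1. \<forall>n\<ge>N1. dT d (x m, s m) (x n, s n) < ereal (e / 2)"
    using cauchy \<open>e > 0\<close> by (meson half_gt_zero)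
  obtain N2 where N2: "\<forall>n\<ge>N2. s n < t + e / 2"
    using order_tendstoD(2)[OF \<open>s \<longlonglongrightarrow> t\<close>, of "t + e / 2"] \<open>e > 0\<close>
    by (auto simp: eventually_sequentially)
  have "d (x m) (x n) < ereal (t + e)" if "max N1 N2 \<le> m" "max N1 N2 \<le> n" for m n
  proof -
    have "d (x m) (x n) - ereal ((s m + s n) / 2) < ereal (e / 2)"
      using N1 that by (auto simp: dT_def)
    moreover have "s m < t + e / 2" "s n < t + e / 2" using N2 that by auto
    ultimately show ?thesis by (cases "d (x m) (x n)") (auto simp: field_simps)
  qed
  then show ?thesis by blast
qed

lemma dT_tendsto_zero:
  assumes "s \<longlonglongrightarrow> t" and close: "\<forall>e>0. \<exists>N. \<forall>n\<ge>N. d (x n) p < ereal (t + e)"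
  shows "(\<lambda>n. dT d (x n, s n) (p, t)) \<longlonglongrightarrow> 0"
proof (rule order_tendstoI)
  fix a :: ereal assume "a < 0"
  then show "\<forall>\<^sub>F n in sequentially. a < dT d (x n, s n) (p, t)"
    by (intro always_eventually allI order_less_le_trans[OF _ dT_nonneg])
next
  fix b :: ereal assume "0 < b"
  then obtain e where e: "0 < e" "ereal e < b"
    using ereal_dense2 by (metis ereal_less(2) less_ereal.elims(2))
  obtain N1 where N1: "\<forall>n\<ge>N1. d (x n) p < ereal (t + e / 2)"
    using close e(1) by (meson half_gt_zero)
  have "\<forall>\<^sub>F n in sequentially. t - e / 2 < s n \<and> s n < t + e / 2"
    using e(1) by (intro eventually_conj order_tendstoD[OF \<open>s \<longlonglongrightarrow> t\<close>]) auto
  then obtain N2 where N2: "\<forall>n\<ge>N2. t - e / 2 < s n \<and> s n < t + e / 2"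
    by (auto simp: eventually_sequentially)
  have "dT d (x n, s n) (p, t) < ereal e" if "max N1 N2 \<le> n" for n
  proof -
    have "d (x n) p < ereal (t + e / 2)" "t - e / 2 < s n" "s n < t + e / 2"
      using N1 N2 that by auto
    then show ?thesis using e(1) by (cases "d (x n) p") (auto simp: dT_def abs_less_iff field_simps)
  qed
  then show "\<forall>\<^sub>F n in sequentially. dT d (x n, s n) (p, t) < b"
    unfolding eventually_sequentially using e(2) by (meson order_less_trans)
qed

lemma backbone_reps_limit:
  assumes pu: "pseudo_ultrametric_on U d"
    and mono: "\<And>x y r r'. y \<in> U \<Longrightarrow> oball U d x r \<subseteq> oball U d y r'
                 \<Longrightarrow> \<mu> (oball U d x r) \<le> \<mu> (oball U d y r')"
    and seq: "\<And>n. (x n, s n) \<in> backbone_reps U d \<mu>" and "s \<longlonglongrightarrow> t"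
    and "p \<in> U" and close: "\<forall>e>0. \<exists>N. \<forall>n\<ge>N. d (x n) p < ereal (t + e)"
  shows "(p, t) \<in> backbone_reps U d \<mu>"
proof -
  have xU: "x n \<in> U" and bb: "bb_f U d \<mu> (x n) \<le> ereal (s n)" and "0 \<le> s n" for n
    using seq[of n] by (auto simp: backbone_reps_def)
  then have "0 \<le> t" using LIMSEQ_le_const[OF \<open>s \<longlonglongrightarrow> t\<close>] by blast
  have above: "bb_f U d \<mu> p \<le> ereal r" if "t < r" for r
  proof -
    define e where "e = (r - t) / 2"
    have e: "0 < e" "t + e < r" using that by (auto simp: e_def field_simps)
    obtain N1 where N1: "\<forall>n\<ge>N1. d (x n) p < ereal (t + e)" using close e(1) by blast
    obtain N2 where N2: "\<forall>n\<ge>N2. s n < t + e"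
      using order_tendstoD(2)[OF \<open>s \<longlonglongrightarrow> t\<close>, of "t + e"] e(1)
      by (auto simp: eventually_sequentially)
    define n where "n = max N1 N2"
    have "s n < t + e" using N2 by (auto simp: n_def)
    then have "bb_f U d \<mu> (x n) < ereal (t + e)" by (simp add: order_le_less_trans[OF bb])
    then have pos: "0 < \<mu> (oball U d (x n) (t + e))"
      by (intro bb_f_less_imp_positive_ball mono xU oball_mono)
    have "oball U d (x n) (t + e) \<subseteq> oball U d p r"
    proof
      fix z assume z: "z \<in> oball U d (x n) (t + e)"
      have "d p z \<le> max (d p (x n)) (d (x n) z)"
        using pu \<open>p \<in> U\<close> xU z by (auto simp: pseudo_ultrametric_on_def oball_def)
      also have "\<dots> < ereal (t + e)"
        using N1 z pu \<open>p \<in> U\<close> xU by (auto simp: n_def oball_def pseudo_ultrametric_on_def)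
      also have "\<dots> < ereal r" using e(2) by simp
      finally show "z \<in> oball U d p r" using z by (auto simp: oball_def)
    qed
    then have "0 < \<mu> (oball U d p r)"
      using mono[OF \<open>p \<in> U\<close>] pos by (meson order_less_le_trans)
    then show ?thesis using that \<open>0 \<le> t\<close> by (auto simp: bb_f_def intro!: Inf_lower)
  qed
  have "bb_f U d \<mu> p \<le> ereal t"
  proof (rule dense_ge)
    fix y assume "ereal t < y"
    then show "bb_f U d \<mu> p \<le> y" using above by (cases y) auto
  qed
  then show ?thesis using \<open>p \<in> U\<close> \<open>0 \<le> t\<close> by (simp add: backbone_reps_def)
qed

lemma complete_backboneI:
  assumes pu: "pseudo_ultrametric_on U d"
    and mono: "\<And>x y r r'. y \<in> U \<Longrightarrow> oball U d x r \<subseteq> oball U d y r'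
                 \<Longrightarrow> \<mu> (oball U d x r) \<le> \<mu> (oball U d y r')"
    and limit: "\<And>x s t. (\<And>n. (x n, s n) \<in> backbone_reps U d \<mu>) \<Longrightarrow> s \<longlonglongrightarrow> t
                 \<Longrightarrow> (\<And>e. e > 0 \<Longrightarrow> \<exists>N. \<forall>m\<ge>N. \<forall>n\<ge>N. d (x m) (x n) < ereal (t + e))
                 \<Longrightarrow> \<exists>p\<in>U. \<forall>e>0. \<exists>N. \<forall>n\<ge>N. d (x n) p < ereal (t + e)"
  shows "complete_quotient_metric (backbone_reps U d \<mu>) (dT d)"
proof -
  let ?S = "backbone_reps U d \<mu>"
  have mem: "fst p \<in> U \<and> 0 \<le> snd p" if "p \<in> ?S" for p
    using that by (auto simp: backbone_reps_def)
  have "\<exists>p\<in>?S. (\<lambda>n. dT d (\<sigma> n) p) \<longlonglongrightarrow> 0"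
    if seq: "\<forall>n. \<sigma> n \<in> ?S"
      and cauchy: "\<forall>e>0. \<exists>N. \<forall>m\<ge>N. \<forall>n\<ge>N. dT d (\<sigma> m) (\<sigma> n) < ereal e" for \<sigma>
  proof -
    define x where "x n = fst (\<sigma> n)" for n
    define s where "s n = snd (\<sigma> n)" for n
    have \<sigma>: "\<sigma> n = (x n, s n)" for n by (simp add: x_def s_def)
    then have "Cauchy s" using cauchy by (intro dT_Cauchy_imp_Cauchy_heights) simp
    then obtain t where t: "s \<longlonglongrightarrow> t" by (auto simp: Cauchy_convergent_iff convergent_def)
    obtain p where "p \<in> U" and close: "\<forall>e>0. \<exists>N. \<forall>n\<ge>N. d (x n) p < ereal (t + e)"
      using limit[of x s t] seq cauchy t dT_Cauchy_imp_eventually_close[of d x s t] by (auto simp: \<sigma>)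
    then have "(p, t) \<in> ?S"
      using backbone_reps_limit[of U d \<mu> x s t p, OF pu mono] seq t by (auto simp: \<sigma>)
    moreover have "(\<lambda>n. dT d (\<sigma> n) (p, t)) \<longlonglongrightarrow> 0"
      unfolding \<sigma> using t close by (rule dT_tendsto_zero)
    ultimately show ?thesis by blast
  qed
  moreover have "\<forall>p\<in>?S. \<forall>q\<in>?S. \<forall>r\<in>?S. dT d p r \<le> dT d p q + dT d q r"
    using pu mem by (blast intro: dT_triangle)
  ultimately show ?thesis
    using pu mem by (auto simp: complete_quotient_metric_def pseudo_ultrametric_on_def
        intro!: dT_self dT_sym dT_nonneg)
qed

section \<open>The comb extended by one-sided limit points\<close>

text \<open>The ghost of \<open>a \<in> [0,1]\<close> on side \<open>\<sigma> \<in> {-1, 1}\<close> is encoded as the real \<open>a + 4 + \<sigma>\<close>, so that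
  ghosts lie in \<open>[3,4] \<union> [5,6]\<close>; \<open>base\<close> and \<open>side\<close> decode a point, real points having side 0.
  \<open>ext_le 1\<close> is the lexicographic order on \<open>(base, side)\<close> and \<open>ext_le (-1)\<close> its reverse, so that
  one-sided arguments can be written once for both sides.\<close>

definition ghost :: "real \<Rightarrow> real \<Rightarrow> real" where
  "ghost a \<sigma> = a + 4 + \<sigma>"

definition base :: "real \<Rightarrow> real" where
  "base x = (if x \<le> 1 then x else if x \<le> 4 then x - 3 else x - 5)"

definition side :: "real \<Rightarrow> real" where
  "side x = (if x \<le> 1 then 0 else if x \<le> 4 then -1 else 1)"

definition ext_le :: "real \<Rightarrow> real \<Rightarrow> real \<Rightarrow> bool" where
  "ext_le \<sigma> x y \<longleftrightarrow> \<sigma> * base x < \<sigma> * base y \<or> (base x = base y \<and> \<sigma> * side x \<le> \<sigma> * side y)"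

lemma base_ghost [simp]: "a \<in> {0..1} \<Longrightarrow> \<sigma> \<in> {-1, 1} \<Longrightarrow> base (ghost a \<sigma>) = a"
  and side_ghost [simp]: "a \<in> {0..1} \<Longrightarrow> \<sigma> \<in> {-1, 1} \<Longrightarrow> side (ghost a \<sigma>) = \<sigma>"
  by (auto simp: base_def side_def ghost_def)

lemma base_real [simp]: "x \<in> {0..1} \<Longrightarrow> base x = x"
  and side_real [simp]: "x \<in> {0..1} \<Longrightarrow> side x = 0"
  by (auto simp: base_def side_def)

lemma ext_le_refl [simp]: "ext_le \<sigma> x x"
  by (simp add: ext_le_def)

lemma ext_le_trans: "ext_le \<sigma> x y \<Longrightarrow> ext_le \<sigma> y z \<Longrightarrow> ext_le \<sigma> x z"
  by (auto simp: ext_le_def)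

lemma ext_le_total: "\<sigma> \<in> {-1, 1} \<Longrightarrow> ext_le \<sigma> x y \<or> ext_le \<sigma> y x"
  by (auto simp: ext_le_def)

lemma ext_le_uminus: "ext_le (- \<sigma>) x y \<longleftrightarrow> ext_le \<sigma> y x"
  by (auto simp: ext_le_def)

lemma ext_le_real:
  "\<sigma> \<in> {-1, 1} \<Longrightarrow> x \<in> {0..1} \<Longrightarrow> y \<in> {0..1} \<Longrightarrow> ext_le \<sigma> x y \<longleftrightarrow> \<sigma> * x \<le> \<sigma> * y"
  by (auto simp: ext_le_def)

abbreviation lebesgue01 :: "real set \<Rightarrow> ennreal" where
  "lebesgue01 B \<equiv> emeasure lborel (B \<inter> {0..1})"

locale comb =
  fixes f :: "real \<Rightarrow> ereal"
  assumes f_nonneg: "\<And>x. 0 \<le> f x"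
begin

definition side_limsup :: "real \<Rightarrow> real \<Rightarrow> ereal" where
  "side_limsup \<sigma> a = (INF \<delta>\<in>{0<..}. SUP h\<in>{0<..<\<delta>}. f (a + \<sigma> * h))"

definition jumps :: "real \<Rightarrow> real set" where
  "jumps \<sigma> = {a \<in> {0..1}. side_limsup \<sigma> a < f a}"

definition ghosts :: "real set" where
  "ghosts = {ghost a \<sigma> | a \<sigma>. \<sigma> \<in> {-1, 1} \<and> a \<in> jumps \<sigma>}"

definition ext_space :: "real set" where
  "ext_space = {0..1} \<union> ghosts"

definition height :: "real \<Rightarrow> ereal" where
  "height x = (if side x = 0 then f (base x) else side_limsup (side x) (base x))"

definition between :: "real \<Rightarrow> real \<Rightarrow> real set" where
  "between x y = {z \<in> ext_space. ext_le 1 x z \<and> ext_le 1 z y \<or> ext_le 1 y z \<and> ext_le 1 z x}"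

definition ext_dist :: "real \<Rightarrow> real \<Rightarrow> ereal" where
  "ext_dist x y = (if x = y then 0 else Sup (height ` between x y))"

lemma ghosts_disjoint: "ghosts \<inter> {0..1} = {}"
  by (auto simp: ghosts_def jumps_def ghost_def)

lemma ext_space_cases:
  assumes "x \<in> ext_space"
  obtains "x \<in> {0..1}" "base x = x" "side x = 0"
    | \<sigma> where "\<sigma> \<in> {-1, 1}" "base x \<in> jumps \<sigma>" "side x = \<sigma>" "x = ghost (base x) \<sigma>"
  using assms by (auto simp: ext_space_def ghosts_def jumps_def)

lemma ext_space_eqI:
  "x \<in> ext_space \<Longrightarrow> y \<in> ext_space \<Longrightarrow> base x = base y \<Longrightarrow> side x = side y \<Longrightarrow> x = y"
  by (elim ext_space_cases) auto

lemma side_range: "x \<in> ext_space \<Longrightarrow> side x \<in> {-1, 0, 1}"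
  by (elim ext_space_cases) auto

lemma ghost_in_ext_space_iff:
  "a \<in> {0..1} \<Longrightarrow> \<sigma> \<in> {-1, 1} \<Longrightarrow> ghost a \<sigma> \<in> ext_space \<longleftrightarrow> a \<in> jumps \<sigma>"
  by (auto simp: ext_space_def ghosts_def jumps_def ghost_def)

lemma ext_le_antisym:
  "\<sigma> \<in> {-1, 1} \<Longrightarrow> x \<in> ext_space \<Longrightarrow> y \<in> ext_space \<Longrightarrow> ext_le \<sigma> x y \<Longrightarrow> ext_le \<sigma> y x \<Longrightarrow> x = y"
  by (rule ext_space_eqI) (auto simp: ext_le_def)

lemma between_sym: "between x y = between y x"
  by (auto simp: between_def)

lemma mem_between_iff:
  assumes "\<sigma> \<in> {-1, 1}"
  shows "z \<in> between x y \<longleftrightarrow>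
           z \<in> ext_space \<and> (ext_le \<sigma> x z \<and> ext_le \<sigma> z y \<or> ext_le \<sigma> y z \<and> ext_le \<sigma> z x)"
  using assms ext_le_uminus[of 1] by (auto simp: between_def)

lemma between_ordered:
  "\<sigma> \<in> {-1, 1} \<Longrightarrow> ext_le \<sigma> x y \<Longrightarrow> z \<in> between x y \<Longrightarrow> ext_le \<sigma> x z \<and> ext_le \<sigma> z y"
  by (auto simp: mem_between_iff intro: ext_le_trans)

lemma between_subset_Un: "between x z \<subseteq> between x y \<union> between y z"
  unfolding between_def using ext_le_total[of 1] ext_le_trans by blast

lemma between_subset: "v \<in> between x w \<Longrightarrow> between x v \<subseteq> between x w"
  unfolding between_def using ext_le_total[of 1] ext_le_trans by blast

lemma left_mem_between: "x \<in> ext_space \<Longrightarrow> x \<in> between x y"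
  unfolding between_def using ext_le_total[of 1] by auto

lemma between_refl: "x \<in> ext_space \<Longrightarrow> between x x = {x}"
  using ext_le_antisym[of 1 _ x] by (auto simp: between_def)

lemma side_limsup_nonneg: "0 \<le> side_limsup \<sigma> a"
  unfolding side_limsup_def
proof (rule INF_greatest)
  fix \<delta> :: real assume "\<delta> \<in> {0<..}"
  then have "\<delta> / 2 \<in> {0<..<\<delta>}" by auto
  then show "0 \<le> (SUP h\<in>{0<..<\<delta>}. f (a + \<sigma> * h))" using f_nonneg by (meson SUP_upper2)
qed

lemma height_nonneg: "0 \<le> height x"
  by (simp add: height_def f_nonneg side_limsup_nonneg)

lemma side_limsup_le:
  assumes "\<delta> > 0" "\<And>h. 0 < h \<Longrightarrow> h < \<delta> \<Longrightarrow> f (a + \<sigma> * h) \<le> c"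
  shows "side_limsup \<sigma> a \<le> c"
proof -
  have "side_limsup \<sigma> a \<le> (SUP h\<in>{0<..<\<delta>}. f (a + \<sigma> * h))"
    unfolding side_limsup_def using assms(1) by (auto intro: INF_lower)
  also have "\<dots> \<le> c" using assms(2) by (auto intro: SUP_least)
  finally show ?thesis .
qed

lemma ext_dist_refl [simp]: "ext_dist x x = 0"
  by (simp add: ext_dist_def)

lemma ext_dist_sym: "ext_dist x y = ext_dist y x"
  by (simp add: ext_dist_def between_sym eq_commute)

lemma height_le_ext_dist: "z \<in> between x y \<Longrightarrow> x \<noteq> y \<Longrightarrow> height z \<le> ext_dist x y"
  by (auto simp: ext_dist_def intro!: Sup_upper)

lemma ext_dist_nonneg: "x \<in> ext_space \<Longrightarrow> 0 \<le> ext_dist x y"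
  using height_le_ext_dist[OF left_mem_between] height_nonneg
  by (metis ext_dist_refl order_refl order_trans)

lemma ext_dist_leI: "0 \<le> c \<Longrightarrow> (\<And>v. v \<in> between x y \<Longrightarrow> height v \<le> c) \<Longrightarrow> ext_dist x y \<le> c"
  by (auto simp: ext_dist_def intro: Sup_least)

lemma ext_dist_ultra:
  assumes "x \<in> ext_space" "y \<in> ext_space" "z \<in> ext_space"
  shows "ext_dist x z \<le> max (ext_dist x y) (ext_dist y z)"
proof (cases "x = y \<or> y = z \<or> x = z")
  case True
  then show ?thesis using assms ext_dist_nonneg by (auto simp: le_max_iff_disj)
next
  case False
  have "Sup (height ` between x z) \<le> Sup (height ` (between x y \<union> between y z))"
    using between_subset_Un by (intro Sup_subset_mono image_mono)
  then show ?thesis using False by (simp add: ext_dist_def image_Un Sup_union_distrib sup_max)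
qed

lemma ext_dist_mono:
  assumes "x \<in> ext_space" "v \<in> between x w"
  shows "ext_dist x v \<le> ext_dist x w"
proof (cases "x = v")
  case True
  then show ?thesis using assms(1) by (simp add: ext_dist_nonneg)
next
  case False
  then have "x \<noteq> w" using assms between_refl by auto
  then show ?thesis
    using False between_subset[OF assms(2)] by (simp add: ext_dist_def Sup_subset_mono image_mono)
qed

lemma pseudo_ultrametric_ext_dist: "pseudo_ultrametric_on ext_space ext_dist"
  unfolding pseudo_ultrametric_on_def
  using ext_dist_nonneg ext_dist_sym ext_dist_ultra by auto

lemma height_between_le_Sup:
  assumes xy: "x \<in> {0..1}" "y \<in> {0..1}" "x < y" and "v \<in> between x y"
  shows "height v \<le> Sup (f ` {x..y})"
proof -
  have v: "v \<in> ext_space" "ext_le 1 x v" "ext_le 1 v y"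
    using between_ordered[of 1 x y v] assms ext_le_real[of 1 x y] by (auto simp: between_def)
  from v(1) show ?thesis
  proof (cases rule: ext_space_cases)
    case 1
    then show ?thesis using v xy by (auto simp: ext_le_real height_def intro!: SUP_upper)
  next
    case (2 \<sigma>)
    define a where "a = base v"
    define \<delta> where "\<delta> = (if \<sigma> = 1 then y - a else a - x)"
    have "a \<in> {0..1}" using 2 by (simp add: a_def jumps_def)
    then have a: "x \<le> a" "a \<le> y" "\<delta> > 0"
      using v xy 2 by (auto simp: ext_le_def a_def \<delta>_def)
    have "side_limsup \<sigma> a \<le> Sup (f ` {x..y})"
    proof (rule side_limsup_le[OF a(3)])
      fix h :: real assume "0 < h" "h < \<delta>"
      then have "a + \<sigma> * h \<in> {x..y}" using a 2(1) by (auto simp: \<delta>_def)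
      then show "f (a + \<sigma> * h) \<le> Sup (f ` {x..y})" by (simp add: SUP_upper)
    qed
    then show ?thesis using 2 by (auto simp: height_def a_def)
  qed
qed

lemma ext_dist_real_less:
  assumes "x \<in> {0..1}" "y \<in> {0..1}" "x < y"
  shows "ext_dist x y = Sup (f ` {x..y})"
proof (rule antisym)
  have "0 \<le> Sup (f ` {x..y})" using assms(3) f_nonneg by (meson SUP_upper2 atLeastAtMost_iff order_refl less_imp_le)
  then show "ext_dist x y \<le> Sup (f ` {x..y})"
    using height_between_le_Sup[OF assms] by (rule ext_dist_leI)
  have "z \<in> between x y" if "z \<in> {x..y}" for z
    using that assms by (auto simp: between_def ext_space_def ext_le_real)
  then show "Sup (f ` {x..y}) \<le> ext_dist x y"
    using height_le_ext_dist assms by (force simp: height_def intro!: SUP_least)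
qed

lemma ext_dist_real:
  assumes "x \<in> {0..1}" "y \<in> {0..1}"
  shows "ext_dist x y = (if x = y then 0 else Sup (f ` {min x y..max x y}))"
  using ext_dist_real_less[of x y] ext_dist_real_less[of y x] assms ext_dist_sym[of x y]
  by (cases x y rule: linorder_cases) auto

lemma countable_jumps: "\<sigma> \<in> {-1, 1} \<Longrightarrow> countable (jumps \<sigma>)"
proof -
  have "countable (jumps 1)"
    by (rule countable_subset[OF _ countable_above_right_limsup])
      (auto simp: jumps_def side_limsup_def)
  moreover have "countable (jumps (-1))"
  proof (rule countable_subset[OF _ countable_image[OF countable_above_right_limsup[of "f \<circ> uminus"]]])
    show "jumps (-1) \<subseteq> uminus ` {b. (INF \<delta>\<in>{0<..}. SUP h\<in>{0<..<\<delta>}. (f \<circ> uminus) (b + h)) < (f \<circ> uminus) b}"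
    proof
      fix a assume "a \<in> jumps (-1)"
      then have "- a \<in> {b. (INF \<delta>\<in>{0<..}. SUP h\<in>{0<..<\<delta>}. (f \<circ> uminus) (b + h)) < (f \<circ> uminus) b}"
        by (simp add: jumps_def side_limsup_def)
      then show "a \<in> uminus ` {b. (INF \<delta>\<in>{0<..}. SUP h\<in>{0<..<\<delta>}. (f \<circ> uminus) (b + h)) < (f \<circ> uminus) b}"
        by (rule rev_image_eqI) simp
    qed
  qed
  ultimately show "\<sigma> \<in> {-1, 1} \<Longrightarrow> countable (jumps \<sigma>)" by auto
qed

lemma countable_ghosts: "countable ghosts"
proof -
  have "ghosts = (\<Union>\<sigma>\<in>{-1, 1}. (\<lambda>a. ghost a \<sigma>) ` jumps \<sigma>)"
    by (auto simp: ghosts_def)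
  then show ?thesis using countable_jumps by simp
qed

lemma oball_real_is_interval:
  assumes "x \<in> ext_space"
  shows "is_interval (oball ext_space ext_dist x r \<inter> {0..1})"
  unfolding is_interval_1
proof (intro ballI allI impI, elim conjE)
  fix a b y assume a: "a \<in> oball ext_space ext_dist x r \<inter> {0..1}"
    and b: "b \<in> oball ext_space ext_dist x r \<inter> {0..1}" and "a \<le> y" "y \<le> b"
  then have y: "y \<in> {0..1}" "y \<in> between a b" by (auto simp: between_def ext_space_def ext_le_real)
  have U: "a \<in> ext_space" "b \<in> ext_space" "y \<in> ext_space" using a b y by (auto simp: ext_space_def)
  have ra: "ext_dist x a < ereal r" and rb: "ext_dist x b < ereal r"
    using a b by (auto simp: oball_def)
  have "ext_dist a y \<le> ext_dist a b" using ext_dist_mono U y by blast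
  also have "\<dots> \<le> max (ext_dist a x) (ext_dist x b)" using ext_dist_ultra assms U by blast
  also have "\<dots> < ereal r" using ra rb by (simp add: ext_dist_sym)
  finally have "ext_dist a y < ereal r" .
  moreover have "ext_dist x y \<le> max (ext_dist x a) (ext_dist a y)"
    using ext_dist_ultra assms U by blast
  ultimately have "ext_dist x y < ereal r" using ra by (simp add: order_le_less_trans)
  then show "y \<in> oball ext_space ext_dist x r \<inter> {0..1}" using U y by (simp add: oball_def)
qed

lemma oball_real_borel: "x \<in> ext_space \<Longrightarrow> oball ext_space ext_dist x r \<inter> {0..1} \<in> sets borel"
  by (intro real_interval_borel_measurable oball_real_is_interval)

lemma ext_dist_eq_0_if_flat:
  assumes "y \<in> {0..1}" "z \<in> {0..1}" "\<And>w. w \<in> {min y z..max y z} \<Longrightarrow> f w = 0"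
  shows "ext_dist y z = 0"
proof -
  have "f ` {min y z..max y z} = (\<lambda>_. 0) ` {min y z..max y z}"
    using assms(3) by (rule image_cong[OF refl])
  also have "\<dots> = {0}" by (rule image_constant[of y]) simp
  finally show ?thesis using assms(1,2) by (simp add: ext_dist_real)
qed

lemma oball_saturated:
  assumes "Z \<subseteq> {0..1}" "\<And>w. w \<in> Z \<Longrightarrow> f w = 0"
    and "x \<in> ext_space" "y \<in> oball ext_space ext_dist x r" "y \<in> Z"
  shows "connected_component_set Z y \<subseteq> oball ext_space ext_dist x r"
proof
  fix z assume z: "z \<in> connected_component_set Z y"
  let ?C = "connected_component_set Z y"
  have C: "is_interval ?C" "?C \<subseteq> Z" "y \<in> ?C"
    using assms(5) by (simp_all add: is_interval_connected_1 connected_component_subset)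
  have "{min y z..max y z} \<subseteq> ?C"
  proof
    fix w assume "w \<in> {min y z..max y z}"
    then have "y \<le> w \<and> w \<le> z \<or> z \<le> w \<and> w \<le> y" by (auto simp: min_def max_def split: if_splits)
    then show "w \<in> ?C" using C(1,3) z unfolding is_interval_1 by blast
  qed
  then have flat: "\<And>w. w \<in> {min y z..max y z} \<Longrightarrow> f w = 0" using C(2) assms(2) by blast
  have real: "y \<in> {0..1}" "z \<in> {0..1}" using C(2) z assms(1,5) by auto
  then have "ext_dist y z = 0" using flat by (rule ext_dist_eq_0_if_flat)
  moreover have U: "y \<in> ext_space" "z \<in> ext_space" using real by (auto simp: ext_space_def)
  ultimately have "ext_dist x z \<le> max (ext_dist x y) 0"
    using ext_dist_ultra[OF assms(3) U] by simp
  also have "\<dots> < ereal r"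
    using assms(4) ext_dist_nonneg[OF assms(3), of y] by (auto simp: oball_def)
  finally show "z \<in> oball ext_space ext_dist x r" using U by (simp add: oball_def)
qed

lemma oball_mass_mono:
  assumes "y \<in> ext_space" "oball ext_space ext_dist x r \<subseteq> oball ext_space ext_dist y r'"
  shows "lebesgue01 (oball ext_space ext_dist x r) \<le> lebesgue01 (oball ext_space ext_dist y r')"
  using assms oball_real_borel[OF assms(1)] by (intro emeasure_mono) auto

end

section \<open>Cauchy sequences in the backbone of the extended comb\<close>

locale comb_cauchy = comb +
  fixes x :: "nat \<Rightarrow> real" and s :: "nat \<Rightarrow> real" and t :: real
  assumes in_backbone: "\<And>n. (x n, s n) \<in> backbone_reps ext_space ext_dist lebesgue01"
    and heights_tendsto: "s \<longlonglongrightarrow> t"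
    and cauchy: "\<And>e. e > 0 \<Longrightarrow> \<exists>N. \<forall>m\<ge>N. \<forall>n\<ge>N. ext_dist (x m) (x n) < ereal (t + e)"
begin

definition tail_ball :: "real \<Rightarrow> real set" where
  "tail_ball e = {z \<in> ext_space. \<exists>N. \<forall>n\<ge>N. ext_dist (x n) z < ereal (t + e)}"

lemma seq_in_ext_space: "x n \<in> ext_space"
  using in_backbone[of n] by (simp add: backbone_reps_def)

lemma limit_height_nonneg: "0 \<le> t"
  using in_backbone by (intro LIMSEQ_le_const[OF heights_tendsto]) (auto simp: backbone_reps_def)

lemma tail_ball_subset: "tail_ball e \<subseteq> ext_space"
  by (auto simp: tail_ball_def)

lemma tail_ball_mono: "e \<le> e' \<Longrightarrow> tail_ball e \<subseteq> tail_ball e'"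
  by (force simp: tail_ball_def intro: order_less_le_trans)

lemma tail_ball_dist:
  assumes "z \<in> tail_ball e" "w \<in> tail_ball e"
  shows "ext_dist z w < ereal (t + e)"
proof -
  obtain N1 N2 where "\<forall>n\<ge>N1. ext_dist (x n) z < ereal (t + e)" "\<forall>n\<ge>N2. ext_dist (x n) w < ereal (t + e)"
    using assms by (auto simp: tail_ball_def)
  then have "ext_dist (x (max N1 N2)) z < ereal (t + e)" "ext_dist (x (max N1 N2)) w < ereal (t + e)"
    by auto
  moreover have "ext_dist z w \<le> max (ext_dist z (x (max N1 N2))) (ext_dist (x (max N1 N2)) w)"
    using assms tail_ball_subset seq_in_ext_space by (blast intro: ext_dist_ultra)
  ultimately show ?thesis by (simp add: ext_dist_sym order_le_less_trans)
qed

lemma eventually_in_tail_ball: "e > 0 \<Longrightarrow> \<exists>N. \<forall>n\<ge>N. x n \<in> tail_ball e"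
  using cauchy seq_in_ext_space by (fastforce simp: tail_ball_def)

lemma tail_ball_convex:
  assumes "z \<in> tail_ball e" "w \<in> tail_ball e" "v \<in> between z w"
  shows "v \<in> tail_ball e"
proof -
  obtain N where N: "\<forall>n\<ge>N. ext_dist (x n) z < ereal (t + e)"
    using assms(1) by (auto simp: tail_ball_def)
  have U: "z \<in> ext_space" "v \<in> ext_space" using assms tail_ball_subset by (auto simp: between_def)
  have "ext_dist z v \<le> ext_dist z w" using ext_dist_mono U assms(3) by blast
  then have zv: "ext_dist z v < ereal (t + e)" using tail_ball_dist[OF assms(1,2)] by simp
  have "ext_dist (x n) v < ereal (t + e)" if "n \<ge> N" for n
  proof -
    have "ext_dist (x n) v \<le> max (ext_dist (x n) z) (ext_dist z v)"
      using ext_dist_ultra seq_in_ext_space U by blast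
    then show ?thesis using N that zv by (simp add: order_le_less_trans)
  qed
  then show ?thesis using U by (auto simp: tail_ball_def)
qed

lemma tail_ball_meets_real: "e > 0 \<Longrightarrow> tail_ball e \<inter> {0..1} \<noteq> {}"
proof -
  assume "e > 0"
  then obtain N1 where N1: "\<forall>n\<ge>N1. x n \<in> tail_ball (e / 2)"
    using eventually_in_tail_ball[of "e / 2"] by auto
  obtain N2 where N2: "\<forall>n\<ge>N2. s n < t + e / 2"
    using order_tendstoD(2)[OF heights_tendsto, of "t + e / 2"] \<open>e > 0\<close>
    by (auto simp: eventually_sequentially)
  define n where "n = max N1 N2"
  have xn: "x n \<in> tail_ball (e / 2)" using N1 by (simp add: n_def)
  have "bb_f ext_space ext_dist lebesgue01 (x n) \<le> ereal (s n)"
    using in_backbone[of n] by (simp add: backbone_reps_def)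
  also have "\<dots> < ereal (t + e / 2)" using N2 by (simp add: n_def)
  finally have "0 < lebesgue01 (oball ext_space ext_dist (x n) (t + e / 2))"
    by (intro bb_f_less_imp_positive_ball oball_mass_mono seq_in_ext_space oball_mono)
  then have "oball ext_space ext_dist (x n) (t + e / 2) \<inter> {0..1} \<noteq> {}"
    by (intro notI) simp
  then obtain z where z: "z \<in> oball ext_space ext_dist (x n) (t + e / 2)" "z \<in> {0..1}"
    by blast
  obtain N3 where N3: "\<forall>m\<ge>N3. ext_dist (x m) (x n) < ereal (t + e / 2)"
    using xn by (auto simp: tail_ball_def)
  have "ext_dist (x m) z < ereal (t + e)" if "m \<ge> N3" for m
  proof -
    have "ext_dist (x m) z \<le> max (ext_dist (x m) (x n)) (ext_dist (x n) z)"
      using ext_dist_ultra seq_in_ext_space z(2) by (simp add: ext_space_def)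
    also have "\<dots> < ereal (t + e / 2)" using N3 that z by (auto simp: oball_def)
    also have "\<dots> < ereal (t + e)" using \<open>e > 0\<close> by simp
    finally show ?thesis .
  qed
  then have "z \<in> tail_ball e" using z by (auto simp: tail_ball_def oball_def)
  then show ?thesis using z by blast
qed

lemma in_all_tail_balls:
  assumes "p \<in> ext_space" "e0 > 0"
    and "\<And>e w. 0 < e \<Longrightarrow> e \<le> e0 \<Longrightarrow> w \<in> tail_ball e \<Longrightarrow> ext_dist w p \<le> ereal (t + e)"
  shows "\<forall>e>0. p \<in> tail_ball e"
proof (intro allI impI)
  fix e :: real assume "e > 0"
  define e' where "e' = min e e0 / 2"
  have e': "0 < e'" "e' \<le> e0" "e' < e" using \<open>e > 0\<close> assms(2) by (auto simp: e'_def)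
  obtain N where "\<forall>n\<ge>N. x n \<in> tail_ball e'" using eventually_in_tail_ball e'(1) by blast
  then have "\<forall>n\<ge>N. ext_dist (x n) p < ereal (t + e)"
    using assms(3)[OF e'(1,2)] e'(3) by (fastforce intro: order_le_less_trans)
  then show "p \<in> tail_ball e" using assms(1) by (auto simp: tail_ball_def)
qed

lemma accumulation_point: "\<exists>a\<in>{0..1}. \<forall>e>0. a \<in> closure (tail_ball e \<inter> {0..1})"
proof -
  define F where "F u = closure (tail_ball (exp (- u)) \<inter> {0..1})" for u :: real
  have F01: "F u \<subseteq> {0..1}" for u
    unfolding F_def by (rule closure_minimal) auto
  have "\<Inter>(range F) \<noteq> {}"
  proof (rule compact_nest)
    show "compact (F u)" for u
      using F01 by (auto simp: F_def intro: bounded_subset[OF bounded_closed_interval] simp: compact_eq_bounded_closed)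
    show "F u \<noteq> {}" for u using tail_ball_meets_real[of "exp (- u)"] by (simp add: F_def)
    show "F v \<subseteq> F u" if "u \<le> v" for u v
      using that unfolding F_def by (intro closure_mono Int_mono tail_ball_mono) auto
  qed
  then obtain a where a: "\<And>u. a \<in> F u" by blast
  have "a \<in> closure (tail_ball e \<inter> {0..1})" if "e > 0" for e
    using a[of "- ln e"] that by (simp add: F_def)
  moreover have "a \<in> {0..1}" using a F01 by blast
  ultimately show ?thesis by blast
qed

lemma tail_ball_on_one_side:
  assumes "a \<in> {0..1}" "a \<notin> tail_ball e"
  shows "\<exists>\<sigma>\<in>{-1, 1}. \<forall>w\<in>tail_ball e. ext_le \<sigma> a w"
proof (cases "\<exists>w\<in>tail_ball e. ext_le (-1) a w")
  case True
  then obtain w where w: "w \<in> tail_ball e" "ext_le (-1) a w" by blast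
  have "ext_le (-1) a w'" if "w' \<in> tail_ball e" for w'
  proof (rule ccontr)
    assume "\<not> ext_le (-1) a w'"
    then have "ext_le (-1) w' a" using ext_le_total[of "-1"] by auto
    then have "a \<in> between w w'"
      using w(2) assms(1) by (auto simp: mem_between_iff[of "-1"] ext_space_def)
    then show False using tail_ball_convex[OF w(1) that] assms(2) by blast
  qed
  then show ?thesis by auto
next
  case False
  then have "\<forall>w\<in>tail_ball e. ext_le 1 a w" using ext_le_total[of 1] ext_le_uminus[of 1] by auto
  then show ?thesis by auto
qed

end

text \<open>The situation where the accumulation point \<open>a\<close> of the real points of the tail balls
  misses one of them: then the tail balls lie on one side \<open>\<sigma>\<close> of \<open>a\<close>, and the limit is \<open>a\<close> itself
  or, if \<open>a\<close> jumps on side \<open>\<sigma>\<close>, its ghost there.\<close>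

locale one_sided_limit = comb_cauchy +
  fixes \<sigma> a e0 :: real
  assumes sign: "\<sigma> \<in> {-1, 1}" and a_real: "a \<in> {0..1}" and e0_pos: "e0 > 0"
    and a_outside: "a \<notin> tail_ball e0"
    and on_side: "\<And>w. w \<in> tail_ball e0 \<Longrightarrow> ext_le \<sigma> a w"
    and accumulates: "\<And>e. e > 0 \<Longrightarrow> a \<in> closure (tail_ball e \<inter> {0..1})"
begin

lemma real_strictly_on_side:
  assumes "0 < e" "e \<le> e0" "z \<in> tail_ball e" "z \<in> {0..1}"
  shows "0 < \<sigma> * (z - a)"
proof -
  have "z \<in> tail_ball e0" using assms(2,3) tail_ball_mono by blast
  then have "ext_le \<sigma> a z" "z \<noteq> a" using on_side a_outside by auto
  then show ?thesis using sign a_real assms(4) by (auto simp: ext_le_real algebra_simps)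
qed

lemma real_near:
  assumes "0 < e" "e \<le> e0" "\<delta> > 0"
  shows "\<exists>z\<in>tail_ball e \<inter> {0..1}. 0 < \<sigma> * (z - a) \<and> \<sigma> * (z - a) < \<delta>"
proof -
  obtain z where z: "z \<in> tail_ball e \<inter> {0..1}" "dist z a < \<delta>"
    using accumulates[OF assms(1)] assms(3) by (auto simp: closure_approachable)
  moreover have "\<sigma> * (z - a) \<le> dist z a" using sign by (auto simp: dist_real_def)
  ultimately show ?thesis using real_strictly_on_side assms(1,2) by fastforce
qed

lemma height_beyond_small:
  assumes "0 < e" "e \<le> e0" "v \<in> ext_space" "0 < \<sigma> * (base v - a)"
    and "w \<in> tail_ball e" "ext_le \<sigma> v w"
  shows "height v < ereal (t + e)"
proof -
  obtain z where z: "z \<in> tail_ball e" "z \<in> {0..1}" "\<sigma> * (z - a) < \<sigma> * (base v - a)"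
    using real_near[OF assms(1,2,4)] by blast
  then have "ext_le \<sigma> z v" "v \<noteq> z" by (auto simp: ext_le_def algebra_simps)
  then have "v \<in> between z w" using assms(3,6) by (auto simp: mem_between_iff[OF sign])
  then have "v \<in> tail_ball e" using tail_ball_convex z(1) assms(5) by blast
  have "height v \<le> ext_dist v z"
    using \<open>v \<noteq> z\<close> assms(3) by (intro height_le_ext_dist left_mem_between)
  also have "\<dots> < ereal (t + e)" using tail_ball_dist \<open>v \<in> tail_ball e\<close> z(1) by blast
  finally show ?thesis .
qed

lemma side_limsup_small:
  assumes "0 < e" "e \<le> e0"
  shows "side_limsup \<sigma> a \<le> ereal (t + e)"
proof -
  obtain z where z: "z \<in> tail_ball e" "z \<in> {0..1}" "0 < \<sigma> * (z - a)"
    using real_near[OF assms, of 1] by auto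
  show ?thesis
  proof (rule side_limsup_le[OF z(3)])
    fix h :: real assume h: "0 < h" "h < \<sigma> * (z - a)"
    define y where "y = a + \<sigma> * h"
    have y: "y \<in> {0..1}" "\<sigma> * (y - a) = h"
      using sign h z(2) a_real by (auto simp: y_def algebra_simps)
    then have "ext_le \<sigma> y z" using h z(2) by (auto simp: ext_le_real[OF sign] algebra_simps)
    then have "height y < ereal (t + e)"
      using y h z(1) by (intro height_beyond_small[OF assms]) (auto simp: ext_space_def)
    then show "f (a + \<sigma> * h) \<le> ereal (t + e)" using y(1) by (simp add: height_def y_def)
  qed
qed

lemma near_point_cases:
  assumes "0 < e" "e \<le> e0" "v \<in> ext_space" "w \<in> tail_ball e" "ext_le \<sigma> a v" "ext_le \<sigma> v w"
  shows "v = a \<or> v = ghost a \<sigma> \<or> height v < ereal (t + e)"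
proof (cases "0 < \<sigma> * (base v - a)")
  case True
  then show ?thesis using height_beyond_small assms by blast
next
  case False
  then have "base v = a" "0 \<le> \<sigma> * side v"
    using assms(5) a_real by (auto simp: ext_le_def algebra_simps)
  with assms(3) show ?thesis
    by (cases rule: ext_space_cases) (use sign in \<open>auto simp: mult_le_0_iff\<close>)
qed

definition limit_point :: real where
  "limit_point = (if a \<in> jumps \<sigma> then ghost a \<sigma> else a)"

lemma limit_point_in_ext_space: "limit_point \<in> ext_space"
  using ghost_in_ext_space_iff[OF a_real sign] a_real by (auto simp: limit_point_def ext_space_def)

lemma limit_point_height:
  assumes "0 < e" "e \<le> e0"
  shows "height limit_point \<le> ereal (t + e)"
  using side_limsup_small[OF assms] a_real sign
  by (auto simp: limit_point_def height_def jumps_def not_less intro: order_trans)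

lemma limit_point_le:
  assumes "w \<in> tail_ball e0"
  shows "ext_le \<sigma> limit_point w"
proof (cases "a \<in> jumps \<sigma>")
  case True
  have w: "w \<in> ext_space" "ext_le \<sigma> a w" "w \<noteq> a"
    using assms on_side a_outside tail_ball_subset by auto
  then have "side w \<noteq> 0 \<or> base w \<noteq> a"
    using ext_space_eqI[of w a] a_real by (auto simp: ext_space_def)
  then show ?thesis
    using True w(2) side_range[OF w(1)] sign a_real
    by (auto simp: limit_point_def ext_le_def)
qed (use on_side assms in \<open>simp add: limit_point_def\<close>)

lemma dist_to_limit_point:
  assumes "0 < e" "e \<le> e0" "w \<in> tail_ball e"
  shows "ext_dist w limit_point \<le> ereal (t + e)"
proof (rule ext_dist_leI)
  show "0 \<le> ereal (t + e)" using limit_height_nonneg assms(1) by simp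
  fix v assume v_between: "v \<in> between w limit_point"
  have "ext_le \<sigma> limit_point w"
    using limit_point_le assms(2,3) tail_ball_mono by blast
  moreover have "v \<in> between limit_point w" using v_between by (simp add: between_sym)
  ultimately have v: "ext_le \<sigma> limit_point v" "ext_le \<sigma> v w"
    using between_ordered[OF sign] by blast+
  have vU: "v \<in> ext_space" using v_between by (simp add: between_def)
  have "ext_le \<sigma> a limit_point"
    using sign a_real by (cases "a \<in> jumps \<sigma>") (auto simp: limit_point_def ext_le_def)
  then have "ext_le \<sigma> a v" using v(1) by (rule ext_le_trans)
  then have "v = a \<or> v = ghost a \<sigma> \<or> height v < ereal (t + e)"
    using near_point_cases[OF assms(1,2) vU assms(3) _ v(2)] by blast
  moreover have "v = limit_point" if "v = a \<or> v = ghost a \<sigma>"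
    using that v(1) vU ghost_in_ext_space_iff[OF a_real sign] sign a_real
    by (auto simp: limit_point_def ext_le_def)
  ultimately show "height v \<le> ereal (t + e)" using limit_point_height[OF assms(1,2)] by auto
qed

lemma limit_point_in_tail_balls: "\<forall>e>0. limit_point \<in> tail_ball e"
  using limit_point_in_ext_space e0_pos dist_to_limit_point by (rule in_all_tail_balls)

end

context comb_cauchy
begin

lemma limit_exists: "\<exists>p\<in>ext_space. \<forall>e>0. \<exists>N. \<forall>n\<ge>N. ext_dist (x n) p < ereal (t + e)"
proof -
  obtain a where a: "a \<in> {0..1}" "\<And>e. e > 0 \<Longrightarrow> a \<in> closure (tail_ball e \<inter> {0..1})"
    using accumulation_point by blast
  have "\<exists>p. \<forall>e>0. p \<in> tail_ball e"
  proof (cases "\<forall>e>0. a \<in> tail_ball e")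
    case False
    then obtain e0 where e0: "e0 > 0" "a \<notin> tail_ball e0" by blast
    then obtain \<sigma> where "\<sigma> \<in> {-1, 1}" "\<forall>w\<in>tail_ball e0. ext_le \<sigma> a w"
      using tail_ball_on_one_side a(1) by blast
    then interpret one_sided_limit f x s t \<sigma> a e0
      using a e0 by unfold_locales auto
    show ?thesis using limit_point_in_tail_balls by blast
  qed blast
  then obtain p where p: "\<forall>e>0. p \<in> tail_ball e" by blast
  then have "p \<in> ext_space" using tail_ball_subset zero_less_one by blast
  with p show ?thesis by (intro bexI[of _ p]) (auto simp: tail_ball_def)
qed

end

context comb
begin

theorem complete_backbone:
  "complete_quotient_metric (backbone_reps ext_space ext_dist lebesgue01) (dT ext_dist)"
proof (rule complete_backboneI[of _ _ lebesgue01, OF pseudo_ultrametric_ext_dist oball_mass_mono])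
  fix x s t
  assume "\<And>n. (x n, s n) \<in> backbone_reps ext_space ext_dist lebesgue01" "s \<longlonglongrightarrow> t"
    and "\<And>e. e > 0 \<Longrightarrow> \<exists>N. \<forall>m\<ge>N. \<forall>n\<ge>N. ext_dist (x m) (x n) < ereal (t + e)"
  then interpret comb_cauchy f x s t by unfold_locales
  show "\<exists>p\<in>ext_space. \<forall>e>0. \<exists>N. \<forall>n\<ge>N. ext_dist (x n) p < ereal (t + e)"
    by (rule limit_exists)
qed

end

lemma scrI_memI:
  assumes "B \<in> sets borel" "B \<subseteq> {0..1}" "open (I 0)"
    and "\<And>y. y \<in> B \<Longrightarrow> y \<in> I 0 \<Longrightarrow> connected_component_set (I 0) y \<subseteq> B"
  shows "B \<in> scrI I"
proof -
  define M where "M = {C \<in> components (I 0). C \<subseteq> B}"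
  have "B = (B - I 0) \<union> \<Union>M"
  proof
    show "B \<subseteq> (B - I 0) \<union> \<Union>M"
    proof
      fix y assume "y \<in> B"
      show "y \<in> (B - I 0) \<union> \<Union>M"
      proof (cases "y \<in> I 0")
        case True
        then have "connected_component_set (I 0) y \<in> M"
          using assms(4) \<open>y \<in> B\<close> by (simp add: M_def componentsI)
        then show ?thesis using connected_component_refl[OF True] by blast
      qed (use \<open>y \<in> B\<close> in blast)
    qed
  qed (auto simp: M_def)
  moreover have "B - I 0 \<in> sets borel" using assms(1,3) by auto
  ultimately show ?thesis
    using assms(2) unfolding scrI_def M_def by blast
qed

lemma (in comb) oball_real_in_scrI:
  assumes "open (I 0)" "I 0 \<subseteq> {0..1}" "\<And>w. w \<in> I 0 \<Longrightarrow> f w = 0" "x \<in> ext_space"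
  shows "oball ext_space ext_dist x r \<inter> {0..1} \<in> scrI I"
proof (rule scrI_memI[of _ I, OF oball_real_borel[OF assms(4)] _ assms(1)])
  fix y assume "y \<in> oball ext_space ext_dist x r \<inter> {0..1}" "y \<in> I 0"
  then have "connected_component_set (I 0) y \<subseteq> oball ext_space ext_dist x r"
    using oball_saturated[OF assms(2,3,4)] by blast
  moreover have "connected_component_set (I 0) y \<subseteq> {0..1}"
    using connected_component_subset assms(2) by blast
  ultimately show "connected_component_set (I 0) y \<subseteq> oball ext_space ext_dist x r \<inter> {0..1}"
    by blast
qed blast

lemma fI_nonneg: "0 \<le> fI I x"
  unfolding fI_def by (rule Inf_greatest) auto

lemma fI_eq_0: "z \<in> I 0 \<Longrightarrow> fI I z = 0"
  using fI_nonneg[of I z] by (auto simp: fI_def intro!: antisym Inf_lower)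

theorem mainTheorem17:
  fixes I :: "real \<Rightarrow> real set"
  assumes "nested_interval_partition I"
  shows "\<exists>(F :: real set) (dbar :: real \<Rightarrow> real \<Rightarrow> ereal).
           countable F \<and> F \<inter> {0..1} = {} \<and>
           pseudo_ultrametric_on ({0..1} \<union> F) dbar \<and>
           (\<forall>x\<in>{0..1}. \<forall>y\<in>{0..1}. dbar x y = dI I x y) \<and>
           (let U = {0..1} \<union> F;
                \<mu> = (\<lambda>B. emeasure lborel (B \<inter> {0..1}))
            in (\<forall>x\<in>U. \<forall>t. oball U dbar x t \<inter> {0..1} \<in> scrI I) \<and>
               complete_quotient_metric (backbone_reps U dbar \<mu>) (dT dbar))"
proof -
  interpret comb "fI I" by unfold_locales (rule fI_nonneg)
  have "open (I 0)" "I 0 \<subseteq> {0<..<1}"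
    using assms by (simp_all add: nested_interval_partition_def)
  then have "oball ext_space ext_dist x r \<inter> {0..1} \<in> scrI I" if "x \<in> ext_space" for x r
    using that fI_eq_0 by (intro oball_real_in_scrI) auto
  moreover have "dI I x y = ext_dist x y" if "x \<in> {0..1}" "y \<in> {0..1}" for x y
    using that by (simp add: dI_def ext_dist_real)
  ultimately show ?thesis
    using countable_ghosts ghosts_disjoint pseudo_ultrametric_ext_dist complete_backbone
    by (intro exI[of _ ghosts] exI[of _ ext_dist]) (simp add: ext_space_def[symmetric])
qed

end
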